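(* Let $\mathcal A,\mathcal B>0$, $\alpha,\beta\in(0,1)$, $h,\tau>0$, $N\ge1$, and assume $$\frac{\tau^{\alpha}(-\alpha^2+4\alpha-2)\mathcal A+\tau^{\beta}(-\beta^2+4\beta-2)\mathcal B}{h^2}\le\frac{37}{120}.$$ Fix a real $\theta$, let $s=\sin^2(\theta h/2)$, and let $\xi_0\in\mathbb C$ and $\xi_1,\dots,\xi_N$ be defined by $$\mathcal Q\,\xi_{k+1}=\mathcal P\,\xi_k-4s\Big[1+\tfrac13 s\Big]\sum_{\ell=2}^{k+1}g_\ell^{(\alpha,\beta)}\xi_{k+1-\ell},\qquad k=0,1,\dots,N-1,$$ where $\mathcal Q=[1-\frac{8}{45}s^2]+4g_0^{(\alpha,\beta)}s[1+\frac13 s]$ and $\mathcal P=[1-\frac{8}{45}s^2]-4g_1^{(\alpha,\beta)}s[1+\frac13 s]$. Then $|\xi_{k+1}|\le|\xi_0|$ for $k=0,1,\dots,N-1$.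
   Context: $\varpi_\ell^{(\sigma)}=(-1)^\ell\binom{\sigma}{\ell}$, $g_0^{(\sigma)}=\frac{1+\sigma}{2}\varpi_0^{(\sigma)}$, $g_\ell^{(\sigma)}=\frac{1+\sigma}{2}\varpi_\ell^{(\sigma)}+\frac{1-\sigma}{2}\varpi_{\ell-1}^{(\sigma)}$ ($\ell\ge1$); $\mu_\alpha=\tau^\alpha\mathcal A/h^2$, $\mu_\beta=\tau^\beta\mathcal B/h^2$, $g_\ell^{(\alpha,\beta)}=\mu_\alpha g_\ell^{(1-\alpha)}+\mu_\beta g_\ell^{(1-\beta)}$. The sum is empty for $k=0$. *)

theory Defs
  imports Complex_Main
begin

definition varpi :: "real \<Rightarrow> nat \<Rightarrow> real" where
  "varpi \<sigma> l = (-1) ^ l * (\<sigma> gchoose l)"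

definition gw :: "real \<Rightarrow> nat \<Rightarrow> real" where
  "gw \<sigma> l = (if l = 0 then (1 + \<sigma>) / 2 * varpi \<sigma> 0
              else (1 + \<sigma>) / 2 * varpi \<sigma> l + (1 - \<sigma>) / 2 * varpi \<sigma> (l - 1))"

definition gab :: "real \<Rightarrow> real \<Rightarrow> real \<Rightarrow> real \<Rightarrow> real \<Rightarrow> real \<Rightarrow> nat \<Rightarrow> real" where
  "gab \<A> \<B> \<alpha> \<beta> h \<tau> l =
     (\<tau> powr \<alpha> * \<A> / h^2) * gw (1 - \<alpha>) l + (\<tau> powr \<beta> * \<B> / h^2) * gw (1 - \<beta>) l"

end

theory Submission
  imports Defs
begin

text \<open>The weights g_l are positive for l = 0 and nonpositive for l \<ge> 2, while all their partial
  sums are nonnegative, because the partial sums of varpi^(\<sigma>) are varpi^(\<sigma>-1) \<ge> 0. Hence the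
  history sum is bounded by (g_0 + g_1) max_(j\<le>k) |\<xi>_j|, and the triangle inequality gives
  Q |\<xi>_(k+1)| \<le> (|P| + 4s(1 + s/3)(g_0 + g_1)) max_(j\<le>k) |\<xi>_j|, whose right-hand factor is
  exactly Q once P \<ge> 0. The hypothesis says 2 g_1 \<le> 37/120, which makes P \<ge> 0 for every
  s \<in> [0,1], with equality at s = 1.\<close>

lemma varpi_0 [simp]: "varpi \<sigma> 0 = 1"
  by (simp add: varpi_def)

lemma varpi_1 [simp]: "varpi \<sigma> (Suc 0) = - \<sigma>"
  by (simp add: varpi_def)

lemma varpi_Suc: "varpi \<sigma> (Suc l) = varpi \<sigma> l * (real l - \<sigma>) / (real l + 1)"
proof -
  have rec: "\<sigma> gchoose Suc l = (\<sigma> - real l) / (real l + 1) * (\<sigma> gchoose l)"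
    using gbinomial_mult_1[of \<sigma> l] by (simp add: field_simps)
  show ?thesis
    unfolding varpi_def rec by (simp add: field_simps)
qed

lemma varpi_nonpos:
  assumes "0 \<le> \<sigma>" "\<sigma> \<le> 1" "1 \<le> l"
  shows "varpi \<sigma> l \<le> 0"
  using assms(3)
proof (induction l rule: dec_induct)
  case base
  then show ?case using assms by simp
next
  case (step n)
  then have "0 \<le> real n - \<sigma>" using assms by simp
  with step.IH show ?case
    by (simp add: varpi_Suc mult_nonpos_nonneg divide_nonpos_pos)
qed

lemma varpi_nonneg:
  assumes "\<sigma> \<le> 0"
  shows "0 \<le> varpi \<sigma> n"
proof (induction n)
  case 0
  then show ?case by simp
next
  case (Suc n)
  have "0 \<le> real n - \<sigma>" using assms by simp
  with Suc.IH show ?case by (simp add: varpi_Suc)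
qed

lemma sum_varpi_atMost: "(\<Sum>l\<le>n. varpi \<sigma> l) = varpi (\<sigma> - 1) n"
proof (induction n)
  case 0
  then show ?case by simp
next
  case (Suc n)
  have "varpi \<sigma> (Suc n) = varpi (\<sigma> - 1) (Suc n) - varpi (\<sigma> - 1) n"
    using gbinomial_Suc_Suc[of "\<sigma> - 1" n] by (simp add: varpi_def algebra_simps)
  with Suc.IH show ?case by simp
qed

lemma gw_0: "gw \<sigma> 0 = (1 + \<sigma>) / 2"
  by (simp add: gw_def)

lemma gw_1: "gw \<sigma> 1 = (1 - 2 * \<sigma> - \<sigma>\<^sup>2) / 2"
  by (simp add: gw_def power2_eq_square field_simps)

lemma gw_nonpos:
  assumes "0 \<le> \<sigma>" "\<sigma> \<le> 1" "2 \<le> l"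
  shows "gw \<sigma> l \<le> 0"
proof -
  have "varpi \<sigma> l \<le> 0" "varpi \<sigma> (l - 1) \<le> 0"
    using varpi_nonpos assms by auto
  with assms show ?thesis
    by (simp add: gw_def add_nonpos_nonpos mult_nonneg_nonpos)
qed

lemma sum_gw_atMost_Suc:
  "(\<Sum>l\<le>Suc n. gw \<sigma> l) = (1 + \<sigma>) / 2 * varpi (\<sigma> - 1) (Suc n) + (1 - \<sigma>) / 2 * varpi (\<sigma> - 1) n"
proof (induction n)
  case 0
  then show ?case by (simp add: gw_def field_simps)
next
  case (Suc n)
  then show ?case
    by (simp add: gw_def algebra_simps flip: sum_varpi_atMost)
qed

lemma sum_gw_atMost_nonneg:
  assumes "-1 \<le> \<sigma>" "\<sigma> \<le> 1"
  shows "0 \<le> (\<Sum>l\<le>n. gw \<sigma> l)"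
proof (cases n)
  case 0
  then show ?thesis using assms by (simp add: gw_0)
next
  case (Suc m)
  have "0 \<le> varpi (\<sigma> - 1) (Suc m)" "0 \<le> varpi (\<sigma> - 1) m"
    using assms by (simp_all add: varpi_nonneg)
  with assms show ?thesis
    unfolding Suc sum_gw_atMost_Suc by (simp add: add_nonneg_nonneg)
qed

context
  fixes \<A> \<B> \<alpha> \<beta> h \<tau> :: real
  assumes pos: "0 < \<A>" "0 < \<B>" "0 < \<tau>" "h \<noteq> 0"
    and exponents: "0 < \<alpha>" "\<alpha> < 1" "0 < \<beta>" "\<beta> < 1"
begin

private abbreviation (input) "a \<equiv> \<tau> powr \<alpha> * \<A> / h\<^sup>2"
private abbreviation (input) "b \<equiv> \<tau> powr \<beta> * \<B> / h\<^sup>2"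

private lemma weights_pos: "0 < a" "0 < b"
  using pos by simp_all

private lemma gab_weights: "gab \<A> \<B> \<alpha> \<beta> h \<tau> l = a * gw (1 - \<alpha>) l + b * gw (1 - \<beta>) l"
  unfolding gab_def by (rule refl)

lemma gab_0_pos: "0 < gab \<A> \<B> \<alpha> \<beta> h \<tau> 0"
  unfolding gab_weights using weights_pos exponents
  by (intro add_pos_pos mult_pos_pos) (simp_all add: gw_0)

lemma gab_nonpos: "2 \<le> l \<Longrightarrow> gab \<A> \<B> \<alpha> \<beta> h \<tau> l \<le> 0"
  unfolding gab_weights using weights_pos exponents gw_nonpos[of "1 - \<alpha>" l] gw_nonpos[of "1 - \<beta>" l]
  by (intro add_nonpos_nonpos mult_nonneg_nonpos) simp_all

lemma sum_gab_atMost_nonneg: "0 \<le> (\<Sum>l\<le>n. gab \<A> \<B> \<alpha> \<beta> h \<tau> l)"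
  using weights_pos exponents sum_gw_atMost_nonneg[of "1 - \<alpha>" n] sum_gw_atMost_nonneg[of "1 - \<beta>" n]
  unfolding gab_weights sum.distrib sum_distrib_left[symmetric]
  by (intro add_nonneg_nonneg mult_nonneg_nonneg) simp_all

end

lemma gab_1:
  assumes "h \<noteq> 0"
  shows "2 * gab \<A> \<B> \<alpha> \<beta> h \<tau> 1
    = (\<tau> powr \<alpha> * (4*\<alpha> - \<alpha>^2 - 2) * \<A> + \<tau> powr \<beta> * (4*\<beta> - \<beta>^2 - 2) * \<B>) / h^2"
  using assms unfolding gab_def gw_1 by (simp add: power2_eq_square field_simps)

lemma amplification_numerator_nonneg:
  fixes s g :: real
  assumes "0 \<le> s" "s \<le> 1" "g \<le> 37 / 240"
  shows "4 * s * (1 + s / 3) * g \<le> 1 - 8/45 * s\<^sup>2"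
proof -
  have "4 * s * (1 + s / 3) * g \<le> 4 * s * (1 + s / 3) * (37 / 240)"
    using assms by (intro mult_left_mono) auto
  also have "\<dots> \<le> 1 - 8/45 * s\<^sup>2"
    using assms mult_left_le[of s s] by (simp add: power2_eq_square field_simps)
  finally show ?thesis .
qed

lemma norm_history_sum_le:
  fixes g :: "nat \<Rightarrow> real" and x :: "nat \<Rightarrow> 'a::real_normed_div_algebra"
  assumes g_nonpos: "\<And>l. 2 \<le> l \<Longrightarrow> g l \<le> 0"
    and partial_sums: "0 \<le> (\<Sum>l\<le>k+1. g l)"
    and bound: "\<And>j. j \<le> k \<Longrightarrow> norm (x j) \<le> M"
  shows "norm (\<Sum>l = 2..k+1. of_real (g l) * x (k + 1 - l)) \<le> (g 0 + g 1) * M"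
proof -
  have M_nonneg: "0 \<le> M" using bound[of 0] norm_ge_zero order_trans by blast
  have "{..k+1} = {0, 1} \<union> {2..k+1}" by auto
  then have tail: "- (\<Sum>l = 2..k+1. g l) \<le> g 0 + g 1"
    using partial_sums by (simp add: sum.union_disjoint)
  have "norm (\<Sum>l = 2..k+1. of_real (g l) * x (k + 1 - l))
      \<le> (\<Sum>l = 2..k+1. norm (of_real (g l) * x (k + 1 - l)))"
    by (rule norm_sum)
  also have "\<dots> \<le> (\<Sum>l = 2..k+1. - g l * M)"
  proof (rule sum_mono)
    fix l assume l: "l \<in> {2..k+1}"
    then have "norm (of_real (g l) * x (k + 1 - l)) = - g l * norm (x (k + 1 - l))"
      using g_nonpos[of l] by (simp add: norm_mult)
    also have "\<dots> \<le> - g l * M"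
      using l g_nonpos[of l] bound[of "k + 1 - l"] by (intro mult_left_mono) auto
    finally show "norm (of_real (g l) * x (k + 1 - l)) \<le> - g l * M" .
  qed
  also have "\<dots> = - (\<Sum>l = 2..k+1. g l) * M"
    by (simp only: sum_negf sum_distrib_right mult_minus_left)
  also have "\<dots> \<le> (g 0 + g 1) * M"
    using tail M_nonneg by (rule mult_right_mono)
  finally show ?thesis .
qed

lemma recursion_step_norm_le:
  fixes g :: "nat \<Rightarrow> real" and x :: "nat \<Rightarrow> 'a::real_normed_div_algebra"
  assumes c_nonneg: "0 \<le> c" and Q_pos: "0 < D + c * g 0" and P_nonneg: "c * g 1 \<le> D"
    and g_nonpos: "\<And>l. 2 \<le> l \<Longrightarrow> g l \<le> 0"
    and partial_sums: "0 \<le> (\<Sum>l\<le>k+1. g l)"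
    and rec: "of_real (D + c * g 0) * x (Suc k)
      = of_real (D - c * g 1) * x k - of_real c * (\<Sum>l = 2..k+1. of_real (g l) * x (k + 1 - l))"
    and bound: "\<And>j. j \<le> k \<Longrightarrow> norm (x j) \<le> M"
  shows "norm (x (Suc k)) \<le> M"
proof -
  let ?S = "\<Sum>l = 2..k+1. of_real (g l) * x (k + 1 - l)"
  have M_nonneg: "0 \<le> M" using bound[of 0] norm_ge_zero order_trans by blast
  have "(D + c * g 0) * norm (x (Suc k)) = norm (of_real (D + c * g 0) * x (Suc k))"
    by (simp only: norm_mult norm_of_real abs_of_pos[OF Q_pos])
  also have "\<dots> = norm (of_real (D - c * g 1) * x k - of_real c * ?S)"
    by (simp only: rec)
  also have "\<dots> \<le> norm (of_real (D - c * g 1) * x k) + norm (of_real c * ?S)"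
    by (rule norm_triangle_ineq4)
  also have "\<dots> = (D - c * g 1) * norm (x k) + c * norm ?S"
    using c_nonneg P_nonneg by (simp only: norm_mult norm_of_real abs_of_nonneg diff_ge_0_iff_ge)
  also have "\<dots> \<le> (D - c * g 1) * M + c * ((g 0 + g 1) * M)"
    using bound[of k] norm_history_sum_le[OF g_nonpos partial_sums bound] c_nonneg P_nonneg
    by (intro add_mono mult_left_mono) auto
  also have "\<dots> = (D + c * g 0) * M"
    by (simp add: algebra_simps)
  finally show ?thesis
    using Q_pos by simp
qed

lemma recursion_norm_le_initial:
  fixes g :: "nat \<Rightarrow> real" and x :: "nat \<Rightarrow> 'a::real_normed_div_algebra"
  assumes "0 \<le> c" "0 < D + c * g 0" "c * g 1 \<le> D"
    and "\<And>l. 2 \<le> l \<Longrightarrow> g l \<le> 0"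
    and "\<And>n. 0 \<le> (\<Sum>l\<le>n. g l)"
    and rec: "\<And>k. k < N \<Longrightarrow> of_real (D + c * g 0) * x (Suc k)
      = of_real (D - c * g 1) * x k - of_real c * (\<Sum>l = 2..k+1. of_real (g l) * x (k + 1 - l))"
  shows "k \<le> N \<Longrightarrow> norm (x k) \<le> norm (x 0)"
proof (induction k rule: less_induct)
  case (less k)
  show ?case
  proof (cases k)
    case (Suc j)
    with less.prems have "j < N" by simp
    with less Suc show ?thesis
      using recursion_step_norm_le[OF assms(1-5) rec] by simp
  qed simp
qed

theorem lemma7:
  fixes \<A> \<B> \<alpha> \<beta> h \<tau> \<theta> :: real and N :: nat and \<xi> :: "nat \<Rightarrow> complex"
  assumes "\<A> > 0" "\<B> > 0" "0 < \<alpha>" "\<alpha> < 1" "0 < \<beta>" "\<beta> < 1" "h > 0" "\<tau> > 0" "N \<ge> 1"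
    and "(\<tau> powr \<alpha> * (4*\<alpha> - \<alpha>^2 - 2) * \<A> + \<tau> powr \<beta> * (4*\<beta> - \<beta>^2 - 2) * \<B>) / h^2
           \<le> 37 / 120"
    and "\<And>k. k < N \<Longrightarrow>
      complex_of_real ((1 - 8/45 * ((sin (\<theta> * h / 2))^2)^2)
          + 4 * gab \<A> \<B> \<alpha> \<beta> h \<tau> 0 * (sin (\<theta> * h / 2))^2 * (1 + (sin (\<theta> * h / 2))^2 / 3))
        * \<xi> (Suc k)
      = complex_of_real ((1 - 8/45 * ((sin (\<theta> * h / 2))^2)^2)
          - 4 * gab \<A> \<B> \<alpha> \<beta> h \<tau> 1 * (sin (\<theta> * h / 2))^2 * (1 + (sin (\<theta> * h / 2))^2 / 3))
        * \<xi> k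
        - complex_of_real (4 * (sin (\<theta> * h / 2))^2 * (1 + (sin (\<theta> * h / 2))^2 / 3))
          * (\<Sum>l = 2..k+1. complex_of_real (gab \<A> \<B> \<alpha> \<beta> h \<tau> l) * \<xi> (k + 1 - l))"
  shows "\<forall>k < N. cmod (\<xi> (Suc k)) \<le> cmod (\<xi> 0)"
proof -
  define s where "s = (sin (\<theta> * h / 2))\<^sup>2"
  define g where "g = gab \<A> \<B> \<alpha> \<beta> h \<tau>"
  define c where "c = 4 * s * (1 + s / 3)"
  define D where "D = 1 - 8/45 * s\<^sup>2"
  have s_bounds: "0 \<le> s" "s \<le> 1"
    unfolding s_def by (simp_all add: abs_square_le_1)
  have g_facts: "0 < g 0" "\<And>l. 2 \<le> l \<Longrightarrow> g l \<le> 0" "\<And>n. 0 \<le> (\<Sum>l\<le>n. g l)"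
    unfolding g_def using gab_0_pos gab_nonpos sum_gab_atMost_nonneg assms(1-8) by auto
  have c_nonneg: "0 \<le> c"
    unfolding c_def using s_bounds by simp
  have "2 * g 1 \<le> 37 / 120"
    unfolding g_def using gab_1[of h] assms(7,10) by simp
  then have P_nonneg: "c * g 1 \<le> D"
    unfolding c_def D_def using amplification_numerator_nonneg[OF s_bounds] by simp
  have "0 < D"
    unfolding D_def using s_bounds power_le_one[of s 2] by simp
  then have Q_pos: "0 < D + c * g 0"
    using c_nonneg g_facts(1) by (simp add: add_pos_nonneg)
  have rec: "of_real (D + c * g 0) * \<xi> (Suc k)
      = of_real (D - c * g 1) * \<xi> k - of_real c * (\<Sum>l = 2..k+1. of_real (g l) * \<xi> (k + 1 - l))"
    if "k < N" for k
  proof -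
    have weight: "4 * g l * s * (1 + s / 3) = c * g l" for l
      unfolding c_def by (simp add: algebra_simps)
    show ?thesis
      using assms(11)[OF that]
      unfolding s_def[symmetric] g_def[symmetric] D_def[symmetric] weight c_def[symmetric] .
  qed
  show ?thesis
    using recursion_norm_le_initial[OF c_nonneg Q_pos P_nonneg g_facts(2,3) rec] by simp
qed

end
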